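(* Let $S_n=(E_{n-m},K_m)$ be a split graph in which the neighbourhoods of all vertices in $E_{n-m}$ are pairwise distinct. If some vertex $v$ of $K_m$ is adjacent to at least $d+1$ vertices of $E_{n-m}$ that have degree $d$, where $d\leq m-2$, then $S_n$ is not word-representable.
   Context: A graph $G=(V,E)$ is word-representable if there exists a word $w$ over the alphabet $V$ such that for all distinct $x,y\in V$, the letters $x$ and $y$ alternate in $w$ if and only if $xy\in E$ (alternation meaning that deleting all letters other than $x$ and $y$ leaves $xyxy\cdots$ or $yxyx\cdots$). The notation $S_n=(E_{n-m},K_m)$ denotes a split graph on $n$ vertices whose vertex set is partitioned into a maximal clique $K_m$ on $m$ vertices and an independent set $E_{n-m}$ on $n-m$ vertices. *)

theory Defs
  imports Main
begin

definition simple_graph :: "'a set \<Rightarrow> ('a \<Rightarrow> 'a \<Rightarrow> bool) \<Rightarrow> bool" where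
  "simple_graph V E \<longleftrightarrow> finite V \<and> (\<forall>x y. E x y \<longrightarrow> E y x) \<and> (\<forall>x. \<not> E x x)
     \<and> (\<forall>x y. E x y \<longrightarrow> x \<in> V \<and> y \<in> V)"

definition nbhd :: "'a set \<Rightarrow> ('a \<Rightarrow> 'a \<Rightarrow> bool) \<Rightarrow> 'a \<Rightarrow> 'a set" where
  "nbhd V E x = {y \<in> V. E x y}"

definition degree :: "'a set \<Rightarrow> ('a \<Rightarrow> 'a \<Rightarrow> bool) \<Rightarrow> 'a \<Rightarrow> nat" where
  "degree V E x = card (nbhd V E x)"

definition alternate :: "'a list \<Rightarrow> 'a \<Rightarrow> 'a \<Rightarrow> bool" where
  "alternate w x y \<longleftrightarrow>
     (let u = filter (\<lambda>z. z = x \<or> z = y) w in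
      \<forall>i. Suc i < length u \<longrightarrow> u ! i \<noteq> u ! Suc i)"

definition word_representable :: "'a set \<Rightarrow> ('a \<Rightarrow> 'a \<Rightarrow> bool) \<Rightarrow> bool" where
  "word_representable V E \<longleftrightarrow>
     (\<exists>w. set w = V \<and> (\<forall>x\<in>V. \<forall>y\<in>V. x \<noteq> y \<longrightarrow> (alternate w x y \<longleftrightarrow> E x y)))"

text \<open>Split graph with partition V = K \<union> I, K a maximal clique, I an independent set.\<close>
definition split_partition :: "'a set \<Rightarrow> ('a \<Rightarrow> 'a \<Rightarrow> bool) \<Rightarrow> 'a set \<Rightarrow> 'a set \<Rightarrow> bool" where
  "split_partition V E I K \<longleftrightarrow>
     V = I \<union> K \<and> I \<inter> K = {} \<and>
     (\<forall>x\<in>K. \<forall>y\<in>K. x \<noteq> y \<longrightarrow> E x y) \<and>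
     (\<forall>x\<in>I. \<forall>y\<in>I. \<not> E x y) \<and>
     (\<forall>x\<in>I. \<exists>y\<in>K. \<not> E x y)"

end

theory Submission
  imports Defs
begin

text \<open>Let \<open>w\<close> represent the graph and let \<open>z\<close> be the subword of \<open>w\<close> on the clique \<open>K\<close>,
  \<open>m = card K\<close>. Two letters alternate exactly when the difference of their numbers of
  occurrences in the prefixes of the word takes at most two consecutive values. As the letters
  of \<open>K\<close> pairwise alternate in \<open>z\<close>, this forces \<open>z\<close> to be periodic: \<open>z ! i = z ! (i mod m)\<close>,
  the first \<open>m\<close> letters listing \<open>K\<close>. For a letter \<open>x\<close> outside \<open>K\<close> the difference between
  \<open>x\<close> and \<open>z ! \<phi>\<close> on a prefix is then \<open>-\<lfloor>(h + m - 1 - \<phi>) / m\<rfloor>\<close>, where \<open>h\<close> (the number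
  of clique letters minus \<open>m\<close> times the number of \<open>x\<close>'s in the prefix) does not depend
  on \<open>\<phi>\<close>; hence the neighbours of \<open>x\<close> in \<open>K\<close> occupy a cyclic interval of positions of \<open>z\<close>.
  A vertex of degree \<open>d < m\<close> adjacent to \<open>v\<close> thus has one of only \<open>d\<close> neighbourhoods,
  the cyclic intervals of length \<open>d\<close> through the position of \<open>v\<close>, so at most \<open>d\<close>
  independent vertices with pairwise distinct neighbourhoods can have these properties.\<close>

section \<open>Alternation and prefix balances\<close>

definition balance :: "'a \<Rightarrow> 'a \<Rightarrow> 'a list \<Rightarrow> int" where
  "balance a b xs = int (count_list xs a) - int (count_list xs b)"

lemma balance_Nil [simp]: "balance a b [] = 0"
  and balance_append [simp]: "balance a b (xs @ ys) = balance a b xs + balance a b ys"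
  by (simp_all add: balance_def)

lemma count_list_filter: "P a \<Longrightarrow> count_list (filter P xs) a = count_list xs a"
  by (induction xs) auto

lemma balance_filter: "P a \<Longrightarrow> P b \<Longrightarrow> balance a b (filter P xs) = balance a b xs"
  by (simp add: balance_def count_list_filter)

lemma alternate_iff_distinct_adj:
  "alternate w a b \<longleftrightarrow> distinct_adj (filter (\<lambda>c. c = a \<or> c = b) w)"
  by (simp add: alternate_def distinct_adj_conv_nth Let_def)

lemma alternate_filter:
  assumes "P a" "P b"
  shows "alternate (filter P w) a b \<longleftrightarrow> alternate w a b"
proof -
  have "filter (\<lambda>c. c = a \<or> c = b) (filter P w) = filter (\<lambda>c. c = a \<or> c = b) w"
    using assms by (auto simp: filter_filter intro: filter_cong)
  then show ?thesis by (simp add: alternate_iff_distinct_adj)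
qed

lemma filter_take_eq_take_filter:
  "filter P (take t w) = take (length (filter P (take t w))) (filter P w)"
  by (metis append_eq_conv_conj append_take_drop_id filter_append)

lemma ex_filter_take_eq_take_filter: "\<exists>t. filter P (take t w) = take j (filter P w)"
proof (induction w arbitrary: j)
  case Nil
  show ?case by simp
next
  case (Cons c w)
  show ?case
  proof (cases "P c")
    case True
    show ?thesis
    proof (cases j)
      case 0
      then show ?thesis by (intro exI[of _ 0]) simp
    next
      case (Suc j')
      obtain t where "filter P (take t w) = take j' (filter P w)"
        using Cons.IH by blast
      then show ?thesis
        using True Suc by (intro exI[of _ "Suc t"]) simp
    qed
  next
    case False
    obtain t where "filter P (take t w) = take j (filter P w)"
      using Cons.IH by blast
    then show ?thesis
      using False by (intro exI[of _ "Suc t"]) simp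
  qed
qed

lemma range_filter_take: "range (\<lambda>t. filter P (take t w)) = range (\<lambda>j. take j (filter P w))"
proof
  show "range (\<lambda>t. filter P (take t w)) \<subseteq> range (\<lambda>j. take j (filter P w))"
    using filter_take_eq_take_filter by blast
  show "range (\<lambda>j. take j (filter P w)) \<subseteq> range (\<lambda>t. filter P (take t w))"
    using ex_filter_take_eq_take_filter by (blast intro: sym)
qed

lemma balance_take_distinct_adj:
  assumes "distinct_adj u" "set u \<subseteq> {a, b}"
  shows "balance a b (take j u) \<in> {0, balance a b [hd u]}"
  using assms
proof (induction u arbitrary: j)
  case Nil
  then show ?case by simp
next
  case (Cons c u)
  have tail: "balance a b (take j' u) \<in> {0, - balance a b [c]}" for j'
  proof (cases "u = []")
    case False
    then have "hd u \<in> set (c # u)"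
      by simp
    then have "hd u \<in> {a, b}"
      using Cons.prems(2) by blast
    moreover have "hd u \<noteq> c" "c \<in> {a, b}"
      using Cons.prems False by (auto simp: distinct_adj_Cons)
    ultimately have "balance a b [hd u] = - balance a b [c]"
      by (auto simp: balance_def)
    moreover have "distinct_adj u" "set u \<subseteq> {a, b}"
      using Cons.prems by (auto dest: distinct_adj_ConsD)
    ultimately show ?thesis
      using Cons.IH[of j'] by simp
  qed simp
  show ?case
  proof (cases j)
    case (Suc j')
    have "balance a b (take j (c # u)) = balance a b [c] + balance a b (take j' u)"
      using balance_append[of a b "[c]" "take j' u"] Suc by simp
    then show ?thesis
      using tail[of j'] by auto
  qed simp
qed

lemma distinct_adj_iff_balance_bounded:
  assumes "a \<noteq> b" "set u \<subseteq> {a, b}"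
  shows "distinct_adj u \<longleftrightarrow> (\<forall>i j. \<bar>balance a b (take i u) - balance a b (take j u)\<bar> \<le> 1)"
proof
  assume "distinct_adj u"
  then have balances: "balance a b (take i u) = 0 \<or> balance a b (take i u) = balance a b [hd u]" for i
    using balance_take_distinct_adj[OF _ assms(2)] by simp
  have "\<bar>balance a b [hd u]\<bar> \<le> 1"
    by (simp add: balance_def)
  then show "\<forall>i j. \<bar>balance a b (take i u) - balance a b (take j u)\<bar> \<le> 1"
    using balances by (intro allI) (smt (verit))
next
  assume bounded: "\<forall>i j. \<bar>balance a b (take i u) - balance a b (take j u)\<bar> \<le> 1"
  show "distinct_adj u"
    unfolding distinct_adj_conv_nth
  proof (intro allI impI notI)
    fix i
    assume i: "Suc i < length u" and eq: "u ! i = u ! Suc i"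
    then have "take (Suc (Suc i)) u = take i u @ [u ! i, u ! i]"
      by (simp add: take_Suc_conv_app_nth)
    moreover have "u ! i \<in> {a, b}"
      using i assms(2) nth_mem[of i u] by (meson Suc_lessD subsetD)
    ultimately have "\<bar>balance a b (take (Suc (Suc i)) u) - balance a b (take i u)\<bar> = 2"
      using assms(1) by (auto simp: balance_def)
    then show False
      using bounded[rule_format, of "Suc (Suc i)" i] by simp
  qed
qed

lemma alternate_iff_balance_bounded:
  assumes "a \<noteq> b"
  shows "alternate w a b \<longleftrightarrow> (\<forall>s t. \<bar>balance a b (take s w) - balance a b (take t w)\<bar> \<le> 1)"
proof -
  let ?u = "filter (\<lambda>c. c = a \<or> c = b) w"
  have "range (\<lambda>t. balance a b (take t w)) = range (\<lambda>t. balance a b (filter (\<lambda>c. c = a \<or> c = b) (take t w)))"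
    by (simp add: balance_filter)
  also have "\<dots> = balance a b ` range (\<lambda>t. filter (\<lambda>c. c = a \<or> c = b) (take t w))"
    by (simp add: image_image)
  also have "\<dots> = range (\<lambda>j. balance a b (take j ?u))"
    by (simp only: range_filter_take image_image)
  finally have ranges: "range (\<lambda>t. balance a b (take t w)) = range (\<lambda>j. balance a b (take j ?u))" .
  have "alternate w a b \<longleftrightarrow> distinct_adj ?u"
    by (rule alternate_iff_distinct_adj)
  also have "\<dots> \<longleftrightarrow> (\<forall>i j. \<bar>balance a b (take i ?u) - balance a b (take j ?u)\<bar> \<le> 1)"
    by (rule distinct_adj_iff_balance_bounded[OF assms]) auto
  also have "\<dots> \<longleftrightarrow> (\<forall>x\<in>range (\<lambda>j. balance a b (take j ?u)). \<forall>y\<in>range (\<lambda>j. balance a b (take j ?u)). \<bar>x - y\<bar> \<le> 1)"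
    by blast
  also have "\<dots> \<longleftrightarrow> (\<forall>s t. \<bar>balance a b (take s w) - balance a b (take t w)\<bar> \<le> 1)"
    unfolding ranges[symmetric] by blast
  finally show ?thesis .
qed

lemma count_list_le_one_if_alternate:
  assumes "alternate (xs @ s @ ys) a b" "a \<noteq> b" "a \<notin> set s"
  shows "count_list s b \<le> 1"
proof -
  have "\<bar>balance a b (take (length (xs @ s)) (xs @ s @ ys)) - balance a b (take (length xs) (xs @ s @ ys))\<bar> \<le> 1"
    using assms(1) alternate_iff_balance_bounded[OF assms(2)] by blast
  then show ?thesis
    using assms(3) by (simp add: balance_def)
qed

lemma count_list_eq_one_if_alternate:
  assumes "alternate (xs @ a # s @ a # ys) a b" "a \<noteq> b" "a \<notin> set s"
  shows "count_list s b = 1"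
proof -
  have "count_list s b \<le> 1"
    using count_list_le_one_if_alternate[of "xs @ [a]" s "a # ys"] assms by simp
  moreover have "\<bar>balance a b (take (length (xs @ a # s @ [a])) (xs @ a # s @ a # ys))
      - balance a b (take (length xs) (xs @ a # s @ a # ys))\<bar> \<le> 1"
    using assms(1) alternate_iff_balance_bounded[OF assms(2)] by blast
  ultimately show ?thesis
    using assms(2,3) by (simp add: balance_def)
qed

lemma div_le_one_iff:
  fixes x m :: int
  assumes "0 < m"
  shows "x div m \<le> 1 \<longleftrightarrow> x < 2 * m"
proof -
  have "(x + (- 2) * m) div m = x div m - 2"
    using div_mult_self1[of m x "- 2"] assms by simp
  then show ?thesis
    using pos_imp_zdiv_neg_iff[OF assms, of "x + (- 2) * m"] by linarith
qed

lemma div_add_minus_div: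
  fixes y d m :: int
  assumes "0 < m"
  shows "(y + d) div m - y div m = (y mod m + d) div m"
proof -
  have "y + d = (y mod m + d) + y div m * m"
    by (simp add: algebra_simps)
  then have "(y + d) div m = (y mod m + d) div m + y div m"
    using assms by (metis add.commute div_mult_self1 less_irrefl)
  then show ?thesis
    by simp
qed

lemma div_spread_le_one_iff:
  fixes h :: "'b \<Rightarrow> int"
  assumes "0 < m" "finite (range h)"
  shows "(\<forall>s t. \<bar>(h s + c) div m - (h t + c) div m\<bar> \<le> 1)
    \<longleftrightarrow> (Min (range h) + c) mod m + (Max (range h) - Min (range h)) < 2 * m"
proof -
  obtain t\<^sub>0 t\<^sub>1 where t\<^sub>0: "h t\<^sub>0 = Min (range h)" and t\<^sub>1: "h t\<^sub>1 = Max (range h)"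
    using Min_in Max_in assms(2) by (metis UNIV_not_empty image_is_empty rangeE)
  have mono: "(h t\<^sub>0 + c) div m \<le> (h t + c) div m \<and> (h t + c) div m \<le> (h t\<^sub>1 + c) div m" for t
    using assms t\<^sub>0 t\<^sub>1 by (auto intro: zdiv_mono1)
  have "(\<forall>s t. \<bar>(h s + c) div m - (h t + c) div m\<bar> \<le> 1)
      \<longleftrightarrow> (h t\<^sub>1 + c) div m - (h t\<^sub>0 + c) div m \<le> 1"
  proof
    assume "\<forall>s t. \<bar>(h s + c) div m - (h t + c) div m\<bar> \<le> 1"
    then show "(h t\<^sub>1 + c) div m - (h t\<^sub>0 + c) div m \<le> 1"
      by (metis abs_le_D1)
  next
    assume "(h t\<^sub>1 + c) div m - (h t\<^sub>0 + c) div m \<le> 1"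
    then show "\<forall>s t. \<bar>(h s + c) div m - (h t + c) div m\<bar> \<le> 1"
      using mono by (smt (verit))
  qed
  also have "(h t\<^sub>1 + c) div m - (h t\<^sub>0 + c) div m = ((h t\<^sub>0 + c) mod m + (h t\<^sub>1 - h t\<^sub>0)) div m"
    using div_add_minus_div[OF assms(1), of "h t\<^sub>0 + c" "h t\<^sub>1 - h t\<^sub>0"] by (simp add: add.commute)
  finally show ?thesis
    using div_le_one_iff[OF assms(1)] t\<^sub>0 t\<^sub>1 by simp
qed

lemma div_Suc_add_diff:
  assumes "r < m"
  shows "(Suc n + m - 1 - r) div m = (n + m - 1 - r) div m + (if n mod m = r then 1 else 0)"
proof -
  define y where "y = n + m - 1 - r"
  have "int (Suc y) = (int n - int r) + int m"
    unfolding y_def using assms by simp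
  then have "Suc y mod m = 0 \<longleftrightarrow> int m dvd (int n - int r) + int m"
    by (metis dvd_eq_mod_eq_0 int_dvd_int_iff)
  also have "\<dots> \<longleftrightarrow> int n mod int m = int r mod int m"
    by (simp add: mod_eq_dvd_iff)
  also have "\<dots> \<longleftrightarrow> n mod m = r"
    using assms by (simp flip: of_nat_mod)
  finally have "Suc y mod m = 0 \<longleftrightarrow> n mod m = r" .
  moreover have "Suc n + m - 1 - r = Suc y"
    unfolding y_def using assms by simp
  ultimately show ?thesis
    unfolding y_def by (simp add: div_Suc)
qed

section \<open>Cyclic intervals\<close>

text \<open>The \<open>l\<close> residues \<open>a, a - 1, \<dots>, a - l + 1\<close> modulo \<open>m\<close>: empty for \<open>l \<le> 0\<close>,
  all of \<open>{..<m}\<close> for \<open>l \<ge> m\<close>.\<close>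

definition cyclic_interval :: "nat \<Rightarrow> int \<Rightarrow> int \<Rightarrow> nat set" where
  "cyclic_interval m a l = {\<phi> \<in> {..<m}. (a - int \<phi>) mod int m < l}"

lemma cyclic_interval_mod: "cyclic_interval m (a mod int m) l = cyclic_interval m a l"
  by (simp add: cyclic_interval_def mod_diff_left_eq)

lemma card_cyclic_interval:
  assumes "0 < m"
  shows "card (cyclic_interval m a l) = nat (min l (int m))"
proof -
  define f where "f \<phi> = nat ((a - int \<phi>) mod int m)" for \<phi>
  have int_f: "int (f \<phi>) = (a - int \<phi>) mod int m" for \<phi>
    using assms by (simp add: f_def)
  have f_less: "f \<phi> < m" for \<phi>
  proof -
    have "int (f \<phi>) < int m"
      unfolding int_f using assms by simp
    then show ?thesis
      by simp
  qed
  have f_f: "f (f \<phi>) = \<phi>" if "\<phi> < m" for \<phi>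
  proof -
    have "int (f (f \<phi>)) = (a - (a - int \<phi>) mod int m) mod int m"
      by (simp add: int_f)
    also have "\<dots> = int \<phi>"
      using that by (simp add: mod_diff_right_eq)
    finally show ?thesis
      by simp
  qed
  have "bij_betw f (cyclic_interval m a l) {t \<in> {..<m}. int t < l}"
    by (rule bij_betw_byWitness[where f' = f])
      (auto simp: cyclic_interval_def f_less f_f int_f mod_diff_right_eq)
  then have "card (cyclic_interval m a l) = card {t \<in> {..<m}. int t < l}"
    by (rule bij_betw_same_card)
  also have "{t \<in> {..<m}. int t < l} = {..<nat (min l (int m))}"
    by auto
  finally show ?thesis
    by simp
qed

lemma cyclic_interval_eq_of_card:
  assumes "0 < m" "card (cyclic_interval m a l) = d" "d < m"
  shows "cyclic_interval m a l = cyclic_interval m a (int d)"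
proof -
  have "max l 0 = int d"
    using assms card_cyclic_interval[OF assms(1), of a l] by (auto simp: min_def max_def split: if_splits)
  moreover have "0 \<le> (a - int \<phi>) mod int m" for \<phi>
    using assms(1) by simp
  ultimately have "(a - int \<phi>) mod int m < l \<longleftrightarrow> (a - int \<phi>) mod int m < int d" for \<phi>
    by (smt (verit))
  then show ?thesis
    unfolding cyclic_interval_def by simp
qed

lemma card_cyclic_intervals_containing:
  assumes "0 < m"
  shows "card {C. \<exists>a. C = cyclic_interval m a (int d) \<and> p \<in> C} \<le> d"
proof -
  have "{C. \<exists>a. C = cyclic_interval m a (int d) \<and> p \<in> C}
      \<subseteq> (\<lambda>i. cyclic_interval m (int p + int i) (int d)) ` {..<d}"
  proof
    fix C
    assume "C \<in> {C. \<exists>a. C = cyclic_interval m a (int d) \<and> p \<in> C}"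
    then obtain a where C: "C = cyclic_interval m a (int d)" and p: "p \<in> C"
      by blast
    define i where "i = nat ((a - int p) mod int m)"
    have "int i = (a - int p) mod int m"
      using assms by (simp add: i_def)
    then have "i < d" and "(int p + int i) mod int m = a mod int m"
      using p unfolding C cyclic_interval_def by (auto simp: mod_add_right_eq)
    then show "C \<in> (\<lambda>i. cyclic_interval m (int p + int i) (int d)) ` {..<d}"
      unfolding C by (metis cyclic_interval_mod image_eqI lessThan_iff)
  qed
  then have "card {C. \<exists>a. C = cyclic_interval m a (int d) \<and> p \<in> C} \<le> card {..<d}"
    by (meson card_image_le card_mono finite_imageI finite_lessThan le_trans)
  then show ?thesis
    by simp
qed

section \<open>Words in which all letters alternate\<close>

lemma length_le_card_if_count_list_le_one:
  assumes "set s \<subseteq> X" "finite X" "\<forall>b\<in>X. count_list s b \<le> 1"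
  shows "length s \<le> card X"
  using sum_count_set[OF assms(1,2)] sum_mono[of X "count_list s" "\<lambda>_. 1"] assms(3) by simp

lemma length_eq_card_if_count_list_eq_one:
  assumes "set s \<subseteq> X" "finite X" "\<forall>b\<in>X. count_list s b = 1"
  shows "length s = card X"
  using sum_count_set[OF assms(1,2)] assms(3) by simp

locale alternating_word =
  fixes z :: "'a list" and K :: "'a set"
  assumes set_word: "set z = K"
    and alternate_letters: "\<lbrakk>a \<in> K; b \<in> K; a \<noteq> b\<rbrakk> \<Longrightarrow> alternate z a b"

context alternating_word
begin

lemma finite_letters: "finite K"
  using set_word by blast

lemma length_gap_less:
  assumes "z = xs @ a # s @ ys" "a \<notin> set s"
  shows "length s < card K"
proof -
  have a: "a \<in> K" and s: "set s \<subseteq> K - {a}"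
    using assms set_word by auto
  have "\<forall>b\<in>K - {a}. count_list s b \<le> 1"
    using assms alternate_letters[OF a] count_list_le_one_if_alternate[of "xs @ [a]" s ys a]
    by auto
  then have "length s \<le> card (K - {a})"
    using length_le_card_if_count_list_le_one[OF s] finite_letters by blast
  then show ?thesis
    using a finite_letters card_Diff1_less[of K a] by linarith
qed

lemma length_gap_eq:
  assumes "z = xs @ a # s @ a # ys" "a \<notin> set s"
  shows "Suc (length s) = card K"
proof -
  have a: "a \<in> K" and s: "set s \<subseteq> K - {a}"
    using assms set_word by auto
  have "\<forall>b\<in>K - {a}. count_list s b = 1"
    using assms alternate_letters[OF a] count_list_eq_one_if_alternate[of xs a s ys] by auto
  then have "length s = card (K - {a})"
    using length_eq_card_if_count_list_eq_one[OF s] finite_letters by blast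
  then show ?thesis
    using a finite_letters card_gt_0_iff by (metis Suc_pred' card_Diff_singleton empty_iff)
qed

lemma nth_add_card:
  assumes "i + card K < length z"
  shows "z ! (i + card K) = z ! i"
proof -
  define a where "a = z ! i"
  define rest where "rest = drop (Suc i) z"
  have z: "z = take i z @ a # rest"
    using assms unfolding a_def rest_def by (simp add: id_take_nth_drop)
  have "a \<in> set rest"
  proof (rule ccontr)
    assume "a \<notin> set rest"
    then have "length rest < card K"
      using length_gap_less[of "take i z" a rest "[]"] z by simp
    then show False
      using assms unfolding rest_def by simp
  qed
  then obtain s ys where rest: "rest = s @ a # ys" and "a \<notin> set s"
    by (blast dest: split_list_first)
  then have "Suc (length s) = card K"
    using length_gap_eq[of "take i z" a s ys] z by simp
  moreover have "length (take i z) = i"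
    using assms by simp
  ultimately show ?thesis
    using z unfolding rest a_def
    by (metis add_Suc_right append_Cons append_assoc length_Cons length_append nth_append_length)
qed

lemma card_pos:
  assumes "i < length z"
  shows "0 < card K"
proof -
  have "K \<noteq> {}"
    using assms set_word by auto
  then show ?thesis
    using finite_letters by (simp add: card_gt_0_iff)
qed

lemma nth_mod_card:
  assumes "i < length z"
  shows "z ! (i mod card K) = z ! i"
  using assms
proof (induction i rule: less_induct)
  case (less i)
  show ?case
  proof (cases "i < card K")
    case False
    then have "z ! (i - card K) = z ! i"
      using nth_add_card[of "i - card K"] less.prems by simp
    moreover have "(i - card K) mod card K = i mod card K"
      using False by (simp add: le_mod_geq)
    moreover have "i - card K < i"
      using False card_pos[OF less.prems] by simp
    ultimately show ?thesis
      using less.IH[of "i - card K"] less.prems by simp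
  qed simp
qed

lemma card_le_length: "card K \<le> length z"
  using card_length set_word by blast

lemma set_take_card: "set (take (card K) z) = K"
proof
  show "set (take (card K) z) \<subseteq> K"
    using set_word by (meson in_set_takeD subsetI)
  show "K \<subseteq> set (take (card K) z)"
  proof
    fix a
    assume "a \<in> K"
    then obtain i where i: "i < length z" "z ! i = a"
      using set_word by (metis in_set_conv_nth)
    then have "i mod card K < card K"
      using card_pos[OF i(1)] by simp
    then show "a \<in> set (take (card K) z)"
      using nth_mod_card[OF i(1)] i card_le_length by (metis in_set_conv_nth length_take min_absorb2 nth_take)
  qed
qed

lemma distinct_take_card: "distinct (take (card K) z)"
  using set_take_card card_le_length by (intro card_distinct) simp

lemma inj_on_nth: "inj_on (nth z) {..<card K}"
  using distinct_take_card card_le_length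
  by (auto simp: inj_on_def distinct_conv_nth)

lemma nth_image: "nth z ` {..<card K} = K"
proof -
  have "nth z ` {..<card K} = set (map (nth (take (card K) z)) [0..<card K])"
    by (auto simp: atLeast0LessThan)
  also have "\<dots> = set (take (card K) z)"
    using card_le_length by (metis length_take map_nth min_absorb2)
  finally show ?thesis
    using set_take_card by simp
qed

lemma nth_eq_nth_iff_mod:
  assumes "n < length z" "\<phi> < card K"
  shows "z ! n = z ! \<phi> \<longleftrightarrow> n mod card K = \<phi>"
proof -
  have "n mod card K < card K"
    using card_pos assms(1) by simp
  then show ?thesis
    using nth_mod_card[OF assms(1)] inj_on_nth assms(2) by (auto simp: inj_on_def)
qed

lemma count_list_take_nth:
  assumes "\<phi> < card K" "n \<le> length z"
  shows "count_list (take n z) (z ! \<phi>) = (n + card K - 1 - \<phi>) div card K"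
  using assms(2)
proof (induction n)
  case (Suc n)
  then have "count_list (take (Suc n) z) (z ! \<phi>) = count_list (take n z) (z ! \<phi>) + (if n mod card K = \<phi> then 1 else 0)"
    using nth_eq_nth_iff_mod[OF _ assms(1)] by (simp add: take_Suc_conv_app_nth)
  then show ?case
    using Suc div_Suc_add_diff[OF assms(1)] by simp
qed (use assms(1) in simp)

end

section \<open>Letters outside the clique\<close>

definition height :: "'a set \<Rightarrow> 'a \<Rightarrow> 'a list \<Rightarrow> int" where
  "height K x u = int (length (filter (\<lambda>c. c \<in> K) u)) - int (card K) * int (count_list u x)"

lemma finite_range_height: "finite (range (\<lambda>t. height K x (take t w)))"
proof -
  have "range (\<lambda>t. height K x (take t w)) \<subseteq> (\<lambda>t. height K x (take t w)) ` {..length w}"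
  proof
    fix h
    assume "h \<in> range (\<lambda>t. height K x (take t w))"
    then obtain t where "h = height K x (take t w)"
      by blast
    then have "h = height K x (take (min t (length w)) w)"
      by (metis min_def nle_le take_all)
    then show "h \<in> (\<lambda>t. height K x (take t w)) ` {..length w}"
      by simp
  qed
  then show ?thesis
    using finite_subset by blast
qed

definition represents :: "'a list \<Rightarrow> 'a set \<Rightarrow> ('a \<Rightarrow> 'a \<Rightarrow> bool) \<Rightarrow> bool" where
  "represents w V E \<longleftrightarrow> set w = V \<and> (\<forall>x\<in>V. \<forall>y\<in>V. x \<noteq> y \<longrightarrow> (alternate w x y \<longleftrightarrow> E x y))"

lemma word_representable_iff: "word_representable V E \<longleftrightarrow> (\<exists>w. represents w V E)"
  by (simp add: word_representable_def represents_def)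

lemma nbhd_eq_alternate:
  assumes "split_partition V E I K" "represents w V E" "x \<in> I"
  shows "nbhd V E x = {y \<in> K. alternate w x y}"
proof -
  have V: "V = I \<union> K" and x: "x \<notin> K" "\<forall>y\<in>I. \<not> E x y"
    using assms(1,3) by (auto simp: split_partition_def)
  have "alternate w x y \<longleftrightarrow> E x y" if "y \<in> K" for y
  proof -
    have "x \<in> V" "y \<in> V" "x \<noteq> y"
      using assms(3) that x(1) V by auto
    then show ?thesis
      using assms(2) by (simp add: represents_def)
  qed
  then show ?thesis
    using V x(2) by (auto simp: nbhd_def)
qed

lemma alternating_word_clique:
  assumes "represents w V E" "K \<subseteq> V" "\<forall>x\<in>K. \<forall>y\<in>K. x \<noteq> y \<longrightarrow> E x y"
  shows "alternating_word (filter (\<lambda>c. c \<in> K) w) K"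
proof
  show "set (filter (\<lambda>c. c \<in> K) w) = K"
    using assms(1,2) by (auto simp: represents_def)
  show "alternate (filter (\<lambda>c. c \<in> K) w) a b" if "a \<in> K" "b \<in> K" "a \<noteq> b" for a b
  proof -
    have "alternate w a b \<longleftrightarrow> E a b"
      using assms(1,2) that by (auto simp: represents_def)
    then show ?thesis
      using assms(3) that by (simp add: alternate_filter)
  qed
qed

context alternating_word
begin

lemma balance_take_eq_div_height:
  assumes "filter (\<lambda>c. c \<in> K) w = z" "\<phi> < card K"
  shows "balance x (z ! \<phi>) (take t w)
    = - ((height K x (take t w) + (int (card K) - 1 - int \<phi>)) div int (card K))"
proof -
  define m where "m = card K"
  define k where "k = length (filter (\<lambda>c. c \<in> K) (take t w))"
  define c where "c = int m - 1 - int \<phi>"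
  have prefix: "filter (\<lambda>c. c \<in> K) (take t w) = take k z"
    unfolding k_def assms(1)[symmetric] by (rule filter_take_eq_take_filter)
  then have "length (take k z) = k"
    by (simp add: k_def)
  then have "k \<le> length z"
    by simp
  have "z ! \<phi> \<in> K"
    using assms(2) card_le_length set_word by auto
  then have "count_list (take t w) (z ! \<phi>) = count_list (take k z) (z ! \<phi>)"
    using prefix count_list_filter[of "\<lambda>c. c \<in> K"] by metis
  also have "\<dots> = (k + m - 1 - \<phi>) div m"
    using count_list_take_nth \<open>k \<le> length z\<close> assms(2) m_def by simp
  finally have count_z: "int (count_list (take t w) (z ! \<phi>)) = (int k + c) div int m"
    using assms(2) unfolding c_def m_def by (simp add: zdiv_int of_nat_diff diff_diff_eq add_diff_eq)
  have "0 < m"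
    using assms(2) m_def by simp
  have decompose: "height K x (take t w) + c = (int k + c) + (- int (count_list (take t w) x)) * int m"
    unfolding height_def k_def m_def by (simp add: algebra_simps)
  have "(height K x (take t w) + c) div int m = (int k + c) div int m - int (count_list (take t w) x)"
    unfolding decompose using \<open>0 < m\<close> div_mult_self1[of "int m" _ "- int (count_list (take t w) x)"]
    by simp
  then show ?thesis
    using count_z unfolding c_def m_def by (simp add: balance_def)
qed

lemma alternating_indices_cyclic_interval:
  assumes "filter (\<lambda>c. c \<in> K) w = z" "x \<notin> K"
  obtains a l where "{\<phi> \<in> {..<card K}. alternate w x (z ! \<phi>)} = cyclic_interval (card K) a l"
proof -
  define m where "m = card K"
  define H where "H t = height K x (take t w)" for t
  define a where "a = Min (range H) + int m - 1"
  define l where "l = 2 * int m - (Max (range H) - Min (range H))"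
  have "alternate w x (z ! \<phi>) \<longleftrightarrow> (a - int \<phi>) mod int m < l" if "\<phi> < m" for \<phi>
  proof -
    have "x \<noteq> z ! \<phi>"
      using assms(2) that card_le_length set_word m_def by auto
    then have "alternate w x (z ! \<phi>)
        \<longleftrightarrow> (\<forall>s t. \<bar>balance x (z ! \<phi>) (take s w) - balance x (z ! \<phi>) (take t w)\<bar> \<le> 1)"
      by (rule alternate_iff_balance_bounded)
    also have "\<dots> \<longleftrightarrow> (\<forall>s t. \<bar>(H s + (int m - 1 - int \<phi>)) div int m - (H t + (int m - 1 - int \<phi>)) div int m\<bar> \<le> 1)"
      unfolding H_def m_def balance_take_eq_div_height[OF assms(1) that[unfolded m_def]]
      by (simp add: abs_minus_commute)
    also have "\<dots> \<longleftrightarrow> (Min (range H) + (int m - 1 - int \<phi>)) mod int m + (Max (range H) - Min (range H)) < 2 * int m"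
      using that finite_range_height unfolding H_def by (intro div_spread_le_one_iff) auto
    also have "\<dots> \<longleftrightarrow> (a - int \<phi>) mod int m < l"
      unfolding a_def l_def by (smt (verit))
    finally show ?thesis .
  qed
  then have "{\<phi> \<in> {..<card K}. alternate w x (z ! \<phi>)} = cyclic_interval m a l"
    by (auto simp: cyclic_interval_def m_def)
  then show ?thesis
    using that m_def by blast
qed

lemma nbhd_eq_image_indices:
  assumes "split_partition V E I K" "represents w V E" "filter (\<lambda>c. c \<in> K) w = z" "x \<in> I"
  shows "nbhd V E x = nth z ` {\<phi> \<in> {..<card K}. alternate w x (z ! \<phi>)}"
  using nbhd_eq_alternate[OF assms(1,2,4)] nth_image by auto

lemma nbhd_indices_cyclic_interval:
  assumes "split_partition V E I K" "represents w V E" "filter (\<lambda>c. c \<in> K) w = z"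
    and "x \<in> I" "card (nbhd V E x) = d" "d < card K"
  obtains a where "{\<phi> \<in> {..<card K}. alternate w x (z ! \<phi>)} = cyclic_interval (card K) a (int d)"
proof -
  let ?N = "{\<phi> \<in> {..<card K}. alternate w x (z ! \<phi>)}"
  have "x \<notin> K"
    using assms(1,4) by (auto simp: split_partition_def)
  then obtain a l where N: "?N = cyclic_interval (card K) a l"
    using alternating_indices_cyclic_interval[OF assms(3)] by blast
  have "card ?N = d"
    using nbhd_eq_image_indices[OF assms(1-4)] assms(5) inj_on_nth
    by (metis (no_types, lifting) card_image inj_on_subset mem_Collect_eq subsetI)
  then show ?thesis
    using that cyclic_interval_eq_of_card[of "card K" a l d] assms(6) N by simp
qed

lemma card_le_degree_if_common_neighbour:
  assumes "split_partition V E I K" "represents w V E" "filter (\<lambda>c. c \<in> K) w = z"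
    and "S \<subseteq> I" "inj_on (nbhd V E) S" "v \<in> K" "d < card K"
    and "\<And>x. x \<in> S \<Longrightarrow> card (nbhd V E x) = d \<and> v \<in> nbhd V E x"
  shows "card S \<le> d"
proof -
  define N where "N x = {\<phi> \<in> {..<card K}. alternate w x (z ! \<phi>)}" for x
  obtain p where p: "p < card K" "z ! p = v"
    using nth_image assms(6) by force
  have N_S: "N x \<in> {C. \<exists>a. C = cyclic_interval (card K) a (int d) \<and> p \<in> C}" if "x \<in> S" for x
  proof -
    have x: "x \<in> I" "card (nbhd V E x) = d" "v \<in> nbhd V E x"
      using that assms(4,8) by auto
    obtain a where "N x = cyclic_interval (card K) a (int d)"
      using nbhd_indices_cyclic_interval[OF assms(1-3) x(1,2) assms(7)] N_def by auto
    moreover have "p \<in> N x"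
      using nbhd_eq_alternate[OF assms(1,2) x(1)] x(3) p by (simp add: N_def)
    ultimately show ?thesis
      by blast
  qed
  have "inj_on N S"
    using assms(5) nbhd_eq_image_indices[OF assms(1-3)] assms(4)
    by (simp add: inj_on_def N_def subset_iff)
  then have "card S \<le> card {C. \<exists>a. C = cyclic_interval (card K) a (int d) \<and> p \<in> C}"
    using N_S by (intro card_inj_on_le) (auto intro: finite_subset[of _ "Pow {..<card K}"] simp: cyclic_interval_def)
  also have "\<dots> \<le> d"
    using card_cyclic_intervals_containing assms(7) by simp
  finally show ?thesis .
qed

end

theorem theorem11:
  fixes V :: "'a set" and E :: "'a \<Rightarrow> 'a \<Rightarrow> bool" and I K :: "'a set"
    and m d :: nat and v :: 'a and S :: "'a set"
  assumes "simple_graph V E"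
    and "split_partition V E I K"
    and "card K = m"
    and "\<forall>x\<in>I. \<forall>y\<in>I. x \<noteq> y \<longrightarrow> nbhd V E x \<noteq> nbhd V E y"
    and "v \<in> K"
    and "S \<subseteq> I" and "card S \<ge> d + 1"
    and "\<forall>s\<in>S. E v s \<and> degree V E s = d"
    and "d + 2 \<le> m"
  shows "\<not> word_representable V E"
proof
  assume "word_representable V E"
  then obtain w where w: "represents w V E"
    by (auto simp: word_representable_iff)
  interpret alternating_word "filter (\<lambda>c. c \<in> K) w" K
    using alternating_word_clique[OF w] assms(2) by (auto simp: split_partition_def)
  have "inj_on (nbhd V E) S"
    using assms(4,6) by (metis inj_onI subsetD)
  moreover have "card (nbhd V E x) = d \<and> v \<in> nbhd V E x" if "x \<in> S" for x
    using that assms(1,5,6,8) by (auto simp: degree_def nbhd_def simple_graph_def)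
  ultimately have "card S \<le> d"
    using card_le_degree_if_common_neighbour[OF assms(2) w refl assms(6) _ assms(5)] assms(3,9) by simp
  then show False
    using assms(7) by simp
qed

end
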